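(* Let $(\Delta,U,\mu_\Delta)$ be an expanding Young tower with $\mu_\Delta(\Delta_n)\le C\rho^n$, $\rho<1$, let $\tau<1$ and let $\epsilon>0$ with $e^{\epsilon}\rho<1$. There exist $C>0$ and $\theta<1$ such that for all $n\in\mathbb N$, $$\int_{U^{-n}\Delta_0}\tau^{\Psi_n}e^{\epsilon\omega}\,d\mu_\Delta\le C\theta^n.$$
   Context: Expanding Young tower: probability space $(\Delta,\mu_\Delta)$, measure-preserving $U$, partition $\{\Delta_{k,p}\}_{0\le k<r_p}$ with $U:\Delta_{k,p}\to\Delta_{k+1,p}$ and $U:\Delta_{r_p-1,p}\to\Delta_0=\bigcup_m\Delta_{0,m}$ measurable isomorphisms, and bounded distortion $|1-J(x)/J(y)|\le C\beta^{s(Ux,Uy)}$ for the inverse Jacobian $J$ and $x,y$ in a common partition element ($s$ the separation time counted in returns to the basis). $\Delta_n=\bigcup_p\Delta_{n,p}$; $\omega(x)=n$ for $x\in\Delta_n$ (height); $\Psi_n(x)=\#\{1\le k\le n:U^kx\in\Delta_0\}$. *)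

theory Defs
  imports "HOL-Probability.Probability"
begin

text \<open>Tower data: index set I of base partition elements, heights r p, floors D k p
  (the set Delta_{k,p}, for p in I and k < r p).\<close>

definition tower_base :: "nat set \<Rightarrow> (nat \<Rightarrow> nat \<Rightarrow> 'a set) \<Rightarrow> 'a set" where
  "tower_base I D = (\<Union>p\<in>I. D 0 p)"

definition tower_level :: "nat set \<Rightarrow> (nat \<Rightarrow> nat) \<Rightarrow> (nat \<Rightarrow> nat \<Rightarrow> 'a set) \<Rightarrow> nat \<Rightarrow> 'a set" where
  "tower_level I r D n = (\<Union>p\<in>{p\<in>I. n < r p}. D n p)"

definition tower_height :: "nat set \<Rightarrow> (nat \<Rightarrow> nat) \<Rightarrow> (nat \<Rightarrow> nat \<Rightarrow> 'a set) \<Rightarrow> 'a \<Rightarrow> nat" where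
  "tower_height I r D x = (THE n. x \<in> tower_level I r D n)"

definition returns :: "('a \<Rightarrow> 'a) \<Rightarrow> 'a set \<Rightarrow> nat \<Rightarrow> 'a \<Rightarrow> nat" where
  "returns U B n x = card {k \<in> {1..n}. (U ^^ k) x \<in> B}"

definition same_elt :: "nat set \<Rightarrow> (nat \<Rightarrow> nat) \<Rightarrow> (nat \<Rightarrow> nat \<Rightarrow> 'a set) \<Rightarrow> 'a \<Rightarrow> 'a \<Rightarrow> bool" where
  "same_elt I r D x y = (\<exists>p\<in>I. \<exists>k<r p. x \<in> D k p \<and> y \<in> D k p)"

definition sep_time :: "nat set \<Rightarrow> (nat \<Rightarrow> nat) \<Rightarrow> (nat \<Rightarrow> nat \<Rightarrow> 'a set) \<Rightarrow> ('a \<Rightarrow> 'a) \<Rightarrow> 'a \<Rightarrow> 'a \<Rightarrow> enat" where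
  "sep_time I r D U x y =
     (if \<exists>j. \<not> same_elt I r D ((U ^^ j) x) ((U ^^ j) y)
      then enat (returns U (tower_base I D) (LEAST j. \<not> same_elt I r D ((U ^^ j) x) ((U ^^ j) y)) x)
      else \<infinity>)"

definition expanding_young_tower ::
  "'a measure \<Rightarrow> ('a \<Rightarrow> 'a) \<Rightarrow> nat set \<Rightarrow> (nat \<Rightarrow> nat) \<Rightarrow> (nat \<Rightarrow> nat \<Rightarrow> 'a set) \<Rightarrow> bool" where
  "expanding_young_tower M U I r D \<longleftrightarrow>
     prob_space M \<and>
     U \<in> M \<rightarrow>\<^sub>M M \<and> distr M M U = M \<and>
     (\<forall>p\<in>I. 1 \<le> r p) \<and>
     (\<forall>p\<in>I. \<forall>k<r p. D k p \<in> sets M) \<and>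
     (\<forall>p\<in>I. \<forall>q\<in>I. \<forall>k<r p. \<forall>l<r q. (k, p) \<noteq> (l, q) \<longrightarrow> D k p \<inter> D l q = {}) \<and>
     (\<Union>p\<in>I. \<Union>k\<in>{..<r p}. D k p) = space M \<and>
     (\<forall>p\<in>I. \<forall>k. Suc k < r p \<longrightarrow> bij_betw U (D k p) (D (Suc k) p)) \<and>
     (\<forall>p\<in>I. bij_betw U (D (r p - 1) p) (tower_base I D)) \<and>
     (\<forall>p\<in>I. \<forall>k<r p. \<forall>A. A \<in> sets M \<and> A \<subseteq> D k p \<longrightarrow> U ` A \<in> sets M) \<and>
     (\<exists>J :: 'a \<Rightarrow> real.
        J \<in> borel_measurable M \<and> (\<forall>x\<in>space M. 0 < J x) \<and>
        (\<forall>p\<in>I. \<forall>k<r p. \<forall>A. A \<in> sets M \<and> A \<subseteq> D k p \<longrightarrow>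
            emeasure M (U ` A) = (\<integral>\<^sup>+x\<in>A. ennreal (1 / J x) \<partial>M)) \<and>
        (\<exists>C \<beta> :: real. 0 < \<beta> \<and> \<beta> < 1 \<and>
           (\<forall>x\<in>space M. \<forall>y\<in>space M. same_elt I r D x y \<longrightarrow>
              (case sep_time I r D U (U x) (U y) of
                 enat m \<Rightarrow> \<bar>1 - J x / J y\<bar> \<le> C * \<beta> ^ m
               | \<infinity> \<Rightarrow> J x = J y))))"

end

theory Submission
  imports Defs
begin

text \<open>
  Let \<open>s\<^sub>n(\<kappa>)\<close> be the integral of \<open>\<kappa>\<^bsup>\<Psi>\<^sub>n\<^esup>\<close> over \<open>\<Delta>\<^sub>0 \<inter> U\<^sup>-\<^sup>n \<Delta>\<^sub>0\<close>.
  A point of \<open>\<Delta>\<^sub>k\<close> in a column of height \<open>k + j\<close> first returns to the base at time \<open>j\<close>.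
  Bounded distortion on the top floor of that column, which \<open>U\<close> maps bijectively onto
  \<open>\<Delta>\<^sub>0\<close>, shows that the image under \<open>U\<^sup>j\<close> of \<open>\<mu>\<close> restricted to these points is at most
  \<open>K\<^sup>2 \<mu>(\<Delta>\<^bsub>k+j-1\<^esub>) / \<mu>(\<Delta>\<^sub>0) \<le> L \<rho>\<^bsup>k+j-1\<^esup>\<close> times \<open>\<mu>\<close> on the base. Hence the integral of
  \<open>\<kappa>\<^bsup>\<Psi>\<^sub>n\<^esup> 1\<^bsub>U\<^sup>-\<^sup>n \<Delta>\<^sub>0\<^esub>\<close> over \<open>\<Delta>\<^sub>k\<close> is at most \<open>\<kappa> L \<Sum>\<^sub>j \<rho>\<^bsup>k+j-1\<^esup> s\<^bsub>n-j\<^esub>(\<kappa>)\<close>,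
  a renewal inequality giving \<open>s\<^sub>n(\<kappa>) \<le> \<mu>(\<Delta>\<^sub>0) \<theta>\<^sup>n\<close> by induction as soon as \<open>\<kappa> L \<le> \<theta> - \<rho>\<close>.
  A general \<open>\<tau> < 1\<close> is reduced to such a small parameter by splitting according to the
  number of returns. Then \<open>\<Delta>\<^sub>k\<close> contributes \<open>O(\<rho>\<^sup>k \<theta>\<^sup>n)\<close>, and the weights
  \<open>e\<^bsup>\<epsilon>k\<^esup>\<close> are summable against \<open>\<rho>\<^sup>k\<close> because \<open>e\<^sup>\<epsilon> \<rho> < 1\<close>.
\<close>

lemma funpow_split_apply: "j \<le> i \<Longrightarrow> (f ^^ i) x = (f ^^ (i - j)) ((f ^^ j) x)"
  by (metis funpow_add comp_apply le_add_diff_inverse2)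

lemma convolution_geometric_le:
  fixes a t :: real
  assumes "0 \<le> a" "a < t"
  shows "(\<Sum>j=1..n. a ^ (j - 1) * t ^ (n - j)) \<le> t ^ n / (t - a)"
proof -
  have "(\<Sum>j=1..n. a ^ (j - 1) * t ^ (n - j)) = (\<Sum>i<n. a ^ (n - Suc i) * t ^ i)"
    by (rule sum.reindex_bij_witness[of _ "\<lambda>i. n - i" "\<lambda>j. n - j"]) auto
  then have "(t - a) * (\<Sum>j=1..n. a ^ (j - 1) * t ^ (n - j)) = t ^ n - a ^ n"
    by (simp add: power_diff_sumr2)
  also have "\<dots> \<le> t ^ n" using assms by simp
  finally show ?thesis using assms by (simp add: field_simps)
qed

lemma obtain_pos_power_less:
  fixes x y :: real
  assumes "0 < y" "0 \<le> x" "x < 1"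
  obtains N where "0 < N" "x ^ N < y"
proof -
  obtain n where "x ^ n < y" using real_arch_pow_inv[OF assms(1,3)] by blast
  moreover have "x ^ Suc n \<le> x ^ n" using assms by (intro power_decreasing) auto
  ultimately show ?thesis using that[of "Suc n"] by simp
qed

lemma power_le_power_or_rescaled:
  fixes \<tau> \<eta> \<nu> :: real
  assumes "0 \<le> \<tau>" "0 \<le> \<eta>" "\<eta> \<le> 1" "\<tau> \<le> \<eta> ^ N" "0 < \<nu>" "\<nu> \<le> 1"
  shows "\<tau> ^ m \<le> \<eta> ^ n + (1 / \<nu>) ^ n * (\<nu> ^ N) ^ m"
proof (cases "n \<le> N * m")
  case True
  have "\<tau> ^ m \<le> (\<eta> ^ N) ^ m" using assms by (intro power_mono) auto
  also have "\<dots> \<le> \<eta> ^ n" using assms True by (simp add: power_mult[symmetric] power_decreasing)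
  finally show ?thesis using assms by (simp add: add_increasing2)
next
  case False
  have "\<nu> ^ n \<le> \<nu> ^ (N * m)" using assms False by (intro power_decreasing) auto
  then have "1 \<le> (1 / \<nu>) ^ n * (\<nu> ^ N) ^ m"
    using assms by (simp add: power_mult[symmetric] field_simps power_divide)
  moreover have "\<tau> ^ m \<le> 1" using assms by (meson power_le_one order_trans)
  ultimately show ?thesis using assms by (simp add: add_increasing)
qed

lemma nn_integral_comp_le_of_emeasure_vimage_le:
  assumes g: "g \<in> M \<rightarrow>\<^sub>M N" and f: "f \<in> borel_measurable N"
    and le: "\<And>A. A \<in> sets N \<Longrightarrow> emeasure M (g -` A \<inter> space M) \<le> emeasure N A"
  shows "(\<integral>\<^sup>+x. f (g x) \<partial>M) \<le> (\<integral>\<^sup>+y. f y \<partial>N)"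
proof -
  have "emeasure (distr M N g) A \<le> emeasure N A" for A
    by (cases "A \<in> sets N") (simp_all add: emeasure_distr[OF g] le emeasure_notin_sets)
  then have "distr M N g \<le> N"
    by (simp add: le_measure_iff le_fun_def)
  then have "(\<integral>\<^sup>+y. f y \<partial>distr M N g) \<le> (\<integral>\<^sup>+y. f y \<partial>N)"
    by (intro nn_integral_mono_measure) auto
  then show ?thesis using g f by (simp add: nn_integral_distr)
qed

lemma bounded_ratio_of_distortion:
  fixes a b c \<beta> :: real
  assumes "0 < b" "0 \<le> \<beta>" "\<beta> \<le> 1"
    and "case s of enat m \<Rightarrow> \<bar>1 - a / b\<bar> \<le> c * \<beta> ^ m | \<infinity> \<Rightarrow> a = b"
  shows "a \<le> (1 + \<bar>c\<bar>) * b"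
proof (cases s)
  case (enat m)
  have "c * \<beta> ^ m \<le> \<bar>c\<bar> * \<beta> ^ m" using assms by (intro mult_right_mono) auto
  also have "\<dots> \<le> \<bar>c\<bar>" using assms by (simp add: mult_left_le power_le_one)
  finally have "c * \<beta> ^ m \<le> \<bar>c\<bar>" .
  then have "a / b \<le> 1 + \<bar>c\<bar>" using assms enat by auto
  then show ?thesis using assms by (simp add: divide_le_eq)
next
  case infinity
  then show ?thesis using assms by simp
qed

locale young_tower = prob_space M for M :: "'a measure" +
  fixes U :: "'a \<Rightarrow> 'a" and I :: "nat set" and r :: "nat \<Rightarrow> nat"
    and D :: "nat \<Rightarrow> nat \<Rightarrow> 'a set" and J :: "'a \<Rightarrow> real" and K :: real
  assumes U_measurable: "U \<in> M \<rightarrow>\<^sub>M M"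
    and U_preserving: "distr M M U = M"
    and height_pos: "p \<in> I \<Longrightarrow> 1 \<le> r p"
    and floor_sets: "p \<in> I \<Longrightarrow> k < r p \<Longrightarrow> D k p \<in> sets M"
    and floors_disjoint: "p \<in> I \<Longrightarrow> q \<in> I \<Longrightarrow> k < r p \<Longrightarrow> l < r q \<Longrightarrow> (k, p) \<noteq> (l, q) \<Longrightarrow>
      D k p \<inter> D l q = {}"
    and floors_cover: "(\<Union>p\<in>I. \<Union>k\<in>{..<r p}. D k p) = space M"
    and bij_floor: "p \<in> I \<Longrightarrow> Suc k < r p \<Longrightarrow> bij_betw U (D k p) (D (Suc k) p)"
    and bij_top: "p \<in> I \<Longrightarrow> bij_betw U (D (r p - 1) p) (tower_base I D)"
    and image_sets: "p \<in> I \<Longrightarrow> k < r p \<Longrightarrow> A \<in> sets M \<Longrightarrow> A \<subseteq> D k p \<Longrightarrow> U ` A \<in> sets M"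
    and J_pos: "x \<in> space M \<Longrightarrow> 0 < J x"
    and jacobian: "p \<in> I \<Longrightarrow> k < r p \<Longrightarrow> A \<in> sets M \<Longrightarrow> A \<subseteq> D k p \<Longrightarrow>
      emeasure M (U ` A) = (\<integral>\<^sup>+x\<in>A. ennreal (1 / J x) \<partial>M)"
    and distortion: "x \<in> space M \<Longrightarrow> y \<in> space M \<Longrightarrow> same_elt I r D x y \<Longrightarrow> J x \<le> K * J y"
begin

abbreviation "base \<equiv> tower_base I D"
abbreviation "level \<equiv> tower_level I r D"

definition column_floor :: "nat \<Rightarrow> nat \<Rightarrow> 'a set" where
  "column_floor k h = (\<Union>p\<in>{p\<in>I. r p = h}. D k p)"

lemma floor_subset_space: "p \<in> I \<Longrightarrow> k < r p \<Longrightarrow> D k p \<subseteq> space M"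
  using floors_cover by blast

lemma in_some_floor: "x \<in> space M \<Longrightarrow> \<exists>p\<in>I. \<exists>k<r p. x \<in> D k p"
  using floors_cover by blast

lemma floor_unique:
  "p \<in> I \<Longrightarrow> q \<in> I \<Longrightarrow> k < r p \<Longrightarrow> l < r q \<Longrightarrow> x \<in> D k p \<Longrightarrow> x \<in> D l q \<Longrightarrow> k = l \<and> p = q"
  using floors_disjoint by blast

lemma K_ge_1: "1 \<le> K"
proof -
  obtain x where x: "x \<in> space M" using not_empty by blast
  then have "same_elt I r D x x" using in_some_floor unfolding same_elt_def by blast
  then have "J x \<le> K * J x" using distortion x by blast
  then show ?thesis using J_pos[OF x] by simp
qed

lemma funpow_floor: "p \<in> I \<Longrightarrow> k + i < r p \<Longrightarrow> x \<in> D k p \<Longrightarrow> (U ^^ i) x \<in> D (k + i) p"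
proof (induction i)
  case (Suc i)
  then have "(U ^^ i) x \<in> D (k + i) p" by simp
  moreover have "bij_betw U (D (k + i) p) (D (Suc (k + i)) p)" using Suc by (intro bij_floor) auto
  ultimately show ?case by (auto dest: bij_betwE)
qed simp

lemma funpow_return_base:
  assumes "p \<in> I" "k < r p" "x \<in> D k p"
  shows "(U ^^ (r p - k)) x \<in> base"
proof -
  have "(U ^^ (r p - 1 - k)) x \<in> D (r p - 1) p"
    using funpow_floor[OF assms(1) _ assms(3), of "r p - 1 - k"] assms(2) by simp
  then have "U ((U ^^ (r p - 1 - k)) x) \<in> base" using bij_top[OF assms(1)] by (auto dest: bij_betwE)
  moreover have "r p - k = Suc (r p - 1 - k)" using assms by simp
  ultimately show ?thesis by simp
qed

lemma upper_floor_not_base: "p \<in> I \<Longrightarrow> 1 \<le> k \<Longrightarrow> k < r p \<Longrightarrow> x \<in> D k p \<Longrightarrow> x \<notin> base"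
  unfolding tower_base_def using floor_unique height_pos
  by (metis UN_E less_le_trans not_one_le_zero zero_less_one)

lemma column_floor_iff: "x \<in> column_floor k h \<longleftrightarrow> (\<exists>p\<in>I. r p = h \<and> x \<in> D k p)"
  unfolding column_floor_def by blast

lemma column_floor_return_base: "k < h \<Longrightarrow> x \<in> column_floor k h \<Longrightarrow> (U ^^ (h - k)) x \<in> base"
  using funpow_return_base unfolding column_floor_iff by blast

lemma column_floor_subset_space: "k < h \<Longrightarrow> column_floor k h \<subseteq> space M"
  using floor_subset_space unfolding column_floor_def by blast

lemma returns_first_return:
  assumes "p \<in> I" "k < r p" "x \<in> D k p" "r p - k \<le> n"
  shows "returns U base n x = Suc (returns U base (n - (r p - k)) ((U ^^ (r p - k)) x))"
proof -
  define j where "j = r p - k"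
  have j1: "1 \<le> j" using assms unfolding j_def by simp
  have before: "(U ^^ i) x \<notin> base" if "1 \<le> i" "i < j" for i
    using funpow_floor[OF assms(1) _ assms(3), of i] upper_floor_not_base[OF assms(1), of "k + i"] that
    unfolding j_def by auto
  have returns_set: "{i \<in> {1..n}. (U ^^ i) x \<in> base}
      = insert j ((\<lambda>i. i + j) ` {i \<in> {1..n - j}. (U ^^ i) ((U ^^ j) x) \<in> base})"
  proof (intro set_eqI iffI)
    fix i assume i: "i \<in> {i \<in> {1..n}. (U ^^ i) x \<in> base}"
    show "i \<in> insert j ((\<lambda>i. i + j) ` {i \<in> {1..n - j}. (U ^^ i) ((U ^^ j) x) \<in> base})"
    proof (cases "i = j")
      case False
      then have "j < i" using before i by force
      then have "i = (i - j) + j" "(U ^^ (i - j)) ((U ^^ j) x) = (U ^^ i) x"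
        using funpow_split_apply[of j i U x] by simp_all
      then show ?thesis using i \<open>j < i\<close> by (intro insertI2 image_eqI[of _ _ "i - j"]) auto
    qed simp
  next
    fix i assume "i \<in> insert j ((\<lambda>i. i + j) ` {i \<in> {1..n - j}. (U ^^ i) ((U ^^ j) x) \<in> base})"
    then show "i \<in> {i \<in> {1..n}. (U ^^ i) x \<in> base}"
    proof
      assume "i = j"
      then show ?thesis using j1 assms funpow_return_base unfolding j_def by auto
    next
      assume "i \<in> (\<lambda>i. i + j) ` {i \<in> {1..n - j}. (U ^^ i) ((U ^^ j) x) \<in> base}"
      then obtain i' where "i = i' + j" "i' \<in> {1..n - j}" "(U ^^ i') ((U ^^ j) x) \<in> base" by auto
      then show ?thesis using funpow_split_apply[of j "i' + j" U x] j1 by auto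
    qed
  qed
  show ?thesis unfolding returns_def returns_set j_def[symmetric]
    by (subst card_insert_disjoint) (auto simp: card_image inj_on_def)
qed

lemma tower_height_eq: "p \<in> I \<Longrightarrow> k < r p \<Longrightarrow> x \<in> D k p \<Longrightarrow> tower_height I r D x = k"
  unfolding tower_height_def tower_level_def by (rule the_equality) (use floor_unique in blast)+

lemma base_eq_level_0: "base = level 0"
  using height_pos unfolding tower_base_def tower_level_def by (auto simp: Suc_le_eq)

lemma funpow_measurable: "U ^^ n \<in> M \<rightarrow>\<^sub>M M"
proof (induction n)
  case (Suc n) then show ?case using measurable_comp[OF Suc.IH U_measurable] by (simp add: comp_def)
qed (simp add: measurable_ident)

lemma emeasure_funpow_vimage: "S \<in> sets M \<Longrightarrow> emeasure M ((U ^^ n) -` S \<inter> space M) = emeasure M S"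
proof (induction n arbitrary: S)
  case 0 then show ?case using sets.sets_into_space by (simp add: Int_absorb2)
next
  case (Suc n)
  have "emeasure M ((U ^^ Suc n) -` S \<inter> space M) = emeasure M ((U ^^ n) -` (U -` S \<inter> space M) \<inter> space M)"
    by (rule arg_cong[where f="emeasure M"]) (use measurable_space[OF funpow_measurable[of n]] in auto)
  also have "\<dots> = emeasure M (U -` S \<inter> space M)"
    using Suc.prems U_measurable by (intro Suc.IH) (simp add: measurable_sets)
  also have "\<dots> = emeasure M S"
    using emeasure_distr[OF U_measurable Suc.prems] U_preserving by simp
  finally show ?case .
qed

lemma level_sets: "level k \<in> sets M"
  unfolding tower_level_def using floor_sets by (intro sets.countable_UN') auto

lemma base_sets: "base \<in> sets M"
  unfolding base_eq_level_0 by (rule level_sets)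

lemma column_floor_sets: "k < h \<Longrightarrow> column_floor k h \<in> sets M"
  unfolding column_floor_def using floor_sets by (intro sets.countable_UN') auto

lemma measure_base_pos: "0 < measure M base"
proof (rule ccontr)
  assume "\<not> 0 < measure M base"
  then have null: "emeasure M base = 0" using measure_nonneg[of M base] by (simp add: emeasure_eq_measure)
  define S where "S n = (U ^^ n) -` base \<inter> space M" for n
  have S_sets: "S n \<in> sets M" for n
    unfolding S_def using funpow_measurable base_sets by (simp add: measurable_sets)
  have "space M \<subseteq> (\<Union>n. S n)"
  proof
    fix x assume x: "x \<in> space M"
    then obtain p k where "p \<in> I" "k < r p" "x \<in> D k p" using in_some_floor by blast
    then show "x \<in> (\<Union>n. S n)" using funpow_return_base x unfolding S_def by blast
  qed
  then have "emeasure M (space M) \<le> emeasure M (\<Union>n. S n)"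
    using S_sets by (intro emeasure_mono) auto
  also have "\<dots> \<le> (\<Sum>n. emeasure M (S n))"
    using S_sets by (intro emeasure_subadditive_countably) auto
  also have "\<dots> = 0" unfolding S_def using emeasure_funpow_vimage[OF base_sets] null by simp
  finally show False using emeasure_space_1 by simp
qed

definition weight :: "real \<Rightarrow> nat \<Rightarrow> 'a \<Rightarrow> ennreal" where
  "weight \<kappa> n x = ennreal (\<kappa> ^ returns U base n x) * indicator base ((U ^^ n) x)"

definition base_weight :: "real \<Rightarrow> nat \<Rightarrow> ennreal" where
  "base_weight \<kappa> n = (\<integral>\<^sup>+y. indicator base y * weight \<kappa> n y \<partial>M)"

lemma weight_measurable: "weight \<kappa> n \<in> borel_measurable M"
proof -
  have ind: "(\<lambda>x. indicator base ((U ^^ i) x) :: real) \<in> borel_measurable M"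
    "(\<lambda>x. indicator base ((U ^^ i) x) :: ennreal) \<in> borel_measurable M" for i
    by (rule measurable_compose[OF funpow_measurable borel_measurable_indicator[OF base_sets]])+
  have "\<kappa> ^ returns U base n x = (\<Prod>i\<in>{1..n}. 1 + (\<kappa> - 1) * indicator base ((U ^^ i) x))" for x
  proof -
    have "{k \<in> {1..n}. (U ^^ k) x \<in> base} = {1..n} \<inter> {i. (U ^^ i) x \<in> base}" by auto
    then have "\<kappa> ^ returns U base n x = (\<Prod>i\<in>{1..n}. if (U ^^ i) x \<in> base then \<kappa> else 1)"
      unfolding returns_def by (simp add: prod.If_cases)
    also have "\<dots> = (\<Prod>i\<in>{1..n}. 1 + (\<kappa> - 1) * indicator base ((U ^^ i) x))"
      by (intro prod.cong) (auto simp: indicator_def)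
    finally show ?thesis .
  qed
  then have "(\<lambda>x. \<kappa> ^ returns U base n x) \<in> borel_measurable M"
    using ind by simp
  then show ?thesis unfolding weight_def using ind by measurable
qed

lemma base_weight_0: "base_weight \<kappa> 0 = emeasure M base"
proof -
  have "base_weight \<kappa> 0 = (\<integral>\<^sup>+y. indicator base y \<partial>M)"
    unfolding base_weight_def weight_def returns_def by (intro nn_integral_cong) (auto simp: indicator_def)
  then show ?thesis using base_sets by simp
qed

lemma level_inter_base: "1 \<le> k \<Longrightarrow> level k \<inter> base = {}"
  unfolding tower_level_def using upper_floor_not_base by blast

lemma nn_integral_level_weight_0:
  "(\<integral>\<^sup>+x. indicator (level k) x * weight \<kappa> 0 x \<partial>M) = emeasure M (level k \<inter> base)"
proof -
  have "indicator (level k) x * weight \<kappa> 0 x = indicator (level k \<inter> base) x" for x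
    by (simp add: weight_def returns_def indicator_def)
  then show ?thesis using level_sets base_sets by simp
qed

lemma inverse_jacobian_le:
  assumes "p \<in> I" "k < r p" "x \<in> D k p" "y \<in> D k p"
  shows "1 / J x \<le> K * (1 / J y)"
proof -
  have space: "x \<in> space M" "y \<in> space M" using floor_subset_space assms by blast+
  moreover have "same_elt I r D y x" unfolding same_elt_def using assms by blast
  ultimately have "J y \<le> K * J x" using distortion by blast
  then show ?thesis using J_pos[OF space(1)] J_pos[OF space(2)] by (simp add: field_simps)
qed

lemma top_floor_distortion:
  assumes p: "p \<in> I" and A: "A \<in> sets M" "A \<subseteq> D (r p - 1) p"
  shows "measure M A * measure M base \<le> K^2 * measure M (D (r p - 1) p) * measure M (U ` A)"
proof (cases "D (r p - 1) p = {}")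
  case True then show ?thesis using A by simp
next
  case False
  define T where "T = D (r p - 1) p"
  have rp: "r p - 1 < r p" using height_pos[OF p] by simp
  obtain y0 where y0: "y0 \<in> T" using False T_def by blast
  have T_space: "T \<subseteq> space M" using floor_subset_space[OF p rp] T_def by simp
  have T_sets: "T \<in> sets M" using floor_sets[OF p rp] T_def by simp
  define c where "c = 1 / J y0"
  have c0: "0 < c" using J_pos y0 T_space c_def by auto
  have K0: "0 < K" using K_ge_1 by simp
  have upper: "1 / J x \<le> K * c" if "x \<in> T" for x
    using inverse_jacobian_le[OF p rp, of x y0] that y0 unfolding T_def c_def by blast
  have lower: "c / K \<le> 1 / J x" if "x \<in> T" for x
  proof -
    have "c \<le> K * (1 / J x)"
      using inverse_jacobian_le[OF p rp, of y0 x] that y0 unfolding T_def c_def by blast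
    then show ?thesis using K0 by (metis mult.commute pos_divide_le_eq)
  qed
  have "ennreal (c / K) * emeasure M A = (\<integral>\<^sup>+x\<in>A. ennreal (c / K) \<partial>M)"
    using A by (simp add: nn_integral_cmult_indicator)
  also have "\<dots> \<le> (\<integral>\<^sup>+x\<in>A. ennreal (1 / J x) \<partial>M)"
    using lower A T_def by (intro nn_integral_mono) (auto simp: indicator_def intro!: ennreal_leI)
  also have "\<dots> = emeasure M (U ` A)"
    using jacobian[OF p rp A] by simp
  finally have image_lower: "c / K * measure M A \<le> measure M (U ` A)"
    using c0 K0 by (simp add: emeasure_eq_measure ennreal_mult[symmetric])
  have "U ` T = base" using bij_top[OF p] T_def by (simp add: bij_betw_def)
  then have "emeasure M base = (\<integral>\<^sup>+x\<in>T. ennreal (1 / J x) \<partial>M)"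
    using jacobian[OF p rp T_sets] T_def by simp
  also have "\<dots> \<le> (\<integral>\<^sup>+x\<in>T. ennreal (K * c) \<partial>M)"
    using upper by (intro nn_integral_mono) (auto simp: indicator_def intro!: ennreal_leI)
  also have "\<dots> = ennreal (K * c) * emeasure M T"
    using T_sets by (simp add: nn_integral_cmult_indicator)
  finally have base_upper: "measure M base \<le> K * c * measure M T"
    using c0 K0 by (simp add: emeasure_eq_measure ennreal_mult[symmetric])
  have "measure M A * measure M base \<le> measure M A * (K * c * measure M T)"
    using base_upper by (rule mult_left_mono) simp
  also have "\<dots> = (c / K * measure M A) * (K^2 * measure M T)"
    using K0 by (simp add: field_simps power2_eq_square)
  also have "\<dots> \<le> measure M (U ` A) * (K^2 * measure M T)"
    using image_lower by (rule mult_right_mono) simp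
  finally show ?thesis unfolding T_def by (simp add: algebra_simps)
qed

definition transfer_const :: "nat \<Rightarrow> real" where
  "transfer_const h = K^2 * measure M (column_floor (h - 1) h) / measure M base"

lemma emeasure_column_floor:
  assumes "k < h"
  shows "emeasure M (column_floor k h) = (\<Sum>p. emeasure M (if p \<in> I \<and> r p = h then D k p else {}))"
proof -
  let ?T = "\<lambda>p. if p \<in> I \<and> r p = h then D k p else {}"
  have "disjoint_family ?T"
    unfolding disjoint_family_on_def using floors_disjoint[of _ _ k k] assms by auto
  moreover have "range ?T \<subseteq> sets M" using floor_sets assms by auto
  moreover have "(\<Union>p. ?T p) = column_floor k h" unfolding column_floor_def by auto
  ultimately show ?thesis using suminf_emeasure[of ?T M] by simp
qed

lemma emeasure_top_floor_vimage_le: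
  assumes p: "p \<in> I" "r p = h" and B: "B \<in> sets M" "B \<subseteq> base"
  shows "emeasure M (D (h - 1) p \<inter> (U -` B \<inter> space M))
    \<le> ennreal (K^2 / measure M base * measure M B) * emeasure M (D (h - 1) p)"
proof -
  define A where "A = D (h - 1) p \<inter> (U -` B \<inter> space M)"
  have A_sets: "A \<in> sets M"
    unfolding A_def using floor_sets[OF p(1)] height_pos[OF p(1)] p(2)
    by (intro sets.Int[OF _ measurable_sets[OF U_measurable B(1)]]) auto
  have "measure M A * measure M base \<le> K^2 * measure M (D (h - 1) p) * measure M (U ` A)"
    using top_floor_distortion[OF p(1) A_sets] p(2) unfolding A_def by auto
  also have "\<dots> \<le> K^2 * measure M (D (h - 1) p) * measure M B"
    using B unfolding A_def by (intro mult_left_mono finite_measure_mono) auto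
  finally have "measure M A \<le> K^2 / measure M base * measure M B * measure M (D (h - 1) p)"
    using measure_base_pos by (simp add: field_simps)
  then show ?thesis
    unfolding A_def by (simp add: emeasure_eq_measure ennreal_mult[symmetric])
qed

lemma emeasure_column_floor_vimage_le:
  assumes j: "1 \<le> j" and A: "A \<in> sets M"
  shows "emeasure M (column_floor k (k + j) \<inter> (U ^^ j) -` A)
    \<le> ennreal (transfer_const (k + j)) * emeasure M (A \<inter> base)"
proof -
  define T where "T p = (if p \<in> I \<and> r p = k + j then D (k + j - 1) p else {})" for p
  define Ap where "Ap p = T p \<inter> (U -` (A \<inter> base) \<inter> space M)" for p
  define c where "c = K^2 / measure M base * measure M (A \<inter> base)"
  have AB: "A \<inter> base \<in> sets M" using A base_sets by simp
  have Ap_sets: "Ap p \<in> sets M" for p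
    unfolding Ap_def T_def using floor_sets[of p "k + j - 1"] j
    by (intro sets.Int[OF _ measurable_sets[OF U_measurable AB]]) auto
  have "column_floor k (k + j) \<inter> (U ^^ j) -` A \<subseteq> (\<Union>p. (U ^^ (j - 1)) -` Ap p \<inter> space M)"
  proof
    fix x assume x: "x \<in> column_floor k (k + j) \<inter> (U ^^ j) -` A"
    then obtain p where p: "p \<in> I" "r p = k + j" "x \<in> D k p" by (auto simp: column_floor_iff)
    have "(U ^^ (j - 1)) x \<in> D (r p - 1) p"
      using funpow_floor[OF p(1) _ p(3), of "j - 1"] p j by simp
    moreover have "U ((U ^^ (j - 1)) x) = (U ^^ j) x"
      using j by (metis Suc_diff_le diff_Suc_1 funpow.simps(2) o_apply)
    moreover have "(U ^^ j) x \<in> base" using column_floor_return_base[of k "k + j" x] x j by simp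
    moreover have "x \<in> space M" using column_floor_subset_space[of k "k + j"] x j by auto
    ultimately show "x \<in> (\<Union>p. (U ^^ (j - 1)) -` Ap p \<inter> space M)"
      using x p measurable_space[OF funpow_measurable[of "j - 1"]] unfolding Ap_def T_def by force
  qed
  then have "emeasure M (column_floor k (k + j) \<inter> (U ^^ j) -` A)
      \<le> emeasure M (\<Union>p. (U ^^ (j - 1)) -` Ap p \<inter> space M)"
    using Ap_sets funpow_measurable by (intro emeasure_mono) (auto simp: measurable_sets)
  also have "\<dots> \<le> (\<Sum>p. emeasure M ((U ^^ (j - 1)) -` Ap p \<inter> space M))"
    using Ap_sets funpow_measurable by (intro emeasure_subadditive_countably) (auto simp: measurable_sets)
  also have "\<dots> = (\<Sum>p. emeasure M (Ap p))"
    using emeasure_funpow_vimage Ap_sets by simp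
  also have "\<dots> \<le> (\<Sum>p. ennreal c * emeasure M (T p))"
    using emeasure_top_floor_vimage_le[OF _ _ AB] unfolding Ap_def T_def c_def
    by (intro suminf_le) auto
  also have "\<dots> = ennreal c * emeasure M (column_floor (k + j - 1) (k + j))"
    using emeasure_column_floor[of "k + j - 1" "k + j"] j unfolding T_def by simp
  finally show ?thesis
    unfolding transfer_const_def c_def
    by (simp add: emeasure_eq_measure ennreal_mult[symmetric] mult_ac)
qed

lemma nn_integral_column_floor_le:
  assumes j: "1 \<le> j" and f: "f \<in> borel_measurable M"
  shows "(\<integral>\<^sup>+x. indicator (column_floor k (k + j)) x * f ((U ^^ j) x) \<partial>M)
    \<le> ennreal (transfer_const (k + j)) * (\<integral>\<^sup>+y. indicator base y * f y \<partial>M)"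
proof -
  define E where "E = column_floor k (k + j)"
  define c where "c = ennreal (transfer_const (k + j))"
  have E_sets: "E \<in> sets M" unfolding E_def using column_floor_sets j by simp
  have E_space: "E \<subseteq> space M" unfolding E_def using column_floor_subset_space j by simp
  have "(\<integral>\<^sup>+x. indicator E x * f ((U ^^ j) x) \<partial>M) = (\<integral>\<^sup>+x. f ((U ^^ j) x) \<partial>density M (indicator E))"
    using E_sets f funpow_measurable by (subst nn_integral_density) (auto intro: measurable_compose)
  also have "\<dots> \<le> (\<integral>\<^sup>+y. f y \<partial>density M (\<lambda>y. c * indicator base y))"
  proof (rule nn_integral_comp_le_of_emeasure_vimage_le)
    fix A assume "A \<in> sets (density M (\<lambda>y. c * indicator base y))"
    then have A: "A \<in> sets M" by simp
    have "E \<inter> ((U ^^ j) -` A \<inter> space M) = E \<inter> (U ^^ j) -` A"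
      using E_space by auto
    then have "emeasure (density M (indicator E)) ((U ^^ j) -` A \<inter> space (density M (indicator E)))
        = emeasure M (E \<inter> (U ^^ j) -` A)"
      using E_sets A funpow_measurable by (subst emeasure_restricted) (auto simp: measurable_sets)
    also have "\<dots> \<le> c * emeasure M (A \<inter> base)"
      unfolding E_def c_def by (rule emeasure_column_floor_vimage_le[OF j A])
    also have "\<dots> = emeasure (density M (\<lambda>y. c * indicator base y)) A"
      using A base_sets
      by (subst emeasure_density) (auto simp: nn_integral_cmult_indicator mult.assoc indicator_inter_arith[symmetric] Int_commute)
    finally show "emeasure (density M (indicator E)) ((U ^^ j) -` A \<inter> space (density M (indicator E)))
        \<le> emeasure (density M (\<lambda>y. c * indicator base y)) A" .
  qed (use funpow_measurable f in simp_all)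
  also have "\<dots> = (\<integral>\<^sup>+y. c * (indicator base y * f y) \<partial>M)"
    using base_sets f by (subst nn_integral_density) (auto simp: mult.assoc)
  also have "\<dots> = c * (\<integral>\<^sup>+y. indicator base y * f y \<partial>M)"
    using base_sets f by (intro nn_integral_cmult) auto
  finally show ?thesis unfolding E_def c_def .
qed

lemma weight_first_return:
  assumes "0 \<le> \<kappa>" "p \<in> I" "k < r p" "x \<in> D k p" "r p - k \<le> n"
  shows "weight \<kappa> n x = ennreal \<kappa> * weight \<kappa> (n - (r p - k)) ((U ^^ (r p - k)) x)"
  using assms returns_first_return[OF assms(2-5)] funpow_split_apply[OF assms(5), of U x]
  unfolding weight_def by (simp add: ennreal_mult mult.assoc)

lemma weight_before_return:
  assumes "p \<in> I" "k < r p" "x \<in> D k p" "1 \<le> n" "n < r p - k"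
  shows "weight \<kappa> n x = 0"
proof -
  have "(U ^^ n) x \<in> D (k + n) p" using assms by (intro funpow_floor) auto
  then have "(U ^^ n) x \<notin> base" using upper_floor_not_base[OF assms(1), of "k + n"] assms by auto
  then show ?thesis unfolding weight_def by simp
qed

lemma level_weight_le_sum:
  assumes \<kappa>: "0 \<le> \<kappa>" and n: "1 \<le> n"
  shows "indicator (level k) x * weight \<kappa> n x
    \<le> (\<Sum>j=1..n. indicator (column_floor k (k + j)) x * (ennreal \<kappa> * weight \<kappa> (n - j) ((U ^^ j) x)))"
proof (cases "x \<in> level k")
  case True
  then obtain p where p: "p \<in> I" "k < r p" "x \<in> D k p" unfolding tower_level_def by blast
  define j where "j = r p - k"
  show ?thesis
  proof (cases "j \<le> n")
    case True
    have "x \<in> column_floor k (k + j)" unfolding column_floor_iff j_def using p by auto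
    then have "indicator (level k) x * weight \<kappa> n x
        = indicator (column_floor k (k + j)) x * (ennreal \<kappa> * weight \<kappa> (n - j) ((U ^^ j) x))"
      using weight_first_return[OF \<kappa> p] True \<open>x \<in> level k\<close> unfolding j_def by simp
    also have "\<dots> \<le> (\<Sum>j=1..n. indicator (column_floor k (k + j)) x * (ennreal \<kappa> * weight \<kappa> (n - j) ((U ^^ j) x)))"
      using True p unfolding j_def by (intro member_le_sum) auto
    finally show ?thesis .
  next
    case False
    then show ?thesis using weight_before_return[OF p n] unfolding j_def by simp
  qed
qed simp

lemma nn_integral_level_weight_le:
  assumes \<kappa>: "0 \<le> \<kappa>" and n: "1 \<le> n"
  shows "(\<integral>\<^sup>+x. indicator (level k) x * weight \<kappa> n x \<partial>M)
    \<le> (\<Sum>j=1..n. ennreal \<kappa> * ennreal (transfer_const (k + j)) * base_weight \<kappa> (n - j))"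
proof -
  have meas: "(\<lambda>x. indicator (column_floor k (k + j)) x * weight \<kappa> (n - j) ((U ^^ j) x)) \<in> borel_measurable M"
    if "j \<in> {1..n}" for j
    using that column_floor_sets[of k "k + j"]
    by (auto intro!: borel_measurable_times_ennreal measurable_compose[OF funpow_measurable weight_measurable])
  have "(\<integral>\<^sup>+x. indicator (level k) x * weight \<kappa> n x \<partial>M)
      \<le> (\<integral>\<^sup>+x. (\<Sum>j=1..n. ennreal \<kappa> * (indicator (column_floor k (k + j)) x * weight \<kappa> (n - j) ((U ^^ j) x))) \<partial>M)"
    using level_weight_le_sum[OF \<kappa> n] by (intro nn_integral_mono) (simp add: mult_ac)
  also have "\<dots> = (\<Sum>j=1..n. ennreal \<kappa> * (\<integral>\<^sup>+x. indicator (column_floor k (k + j)) x * weight \<kappa> (n - j) ((U ^^ j) x) \<partial>M))"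
    using meas by (subst nn_integral_sum) (auto intro!: sum.cong nn_integral_cmult)
  also have "\<dots> \<le> (\<Sum>j=1..n. ennreal \<kappa> * (ennreal (transfer_const (k + j)) * base_weight \<kappa> (n - j)))"
    unfolding base_weight_def
    by (intro sum_mono mult_left_mono nn_integral_column_floor_le weight_measurable) auto
  finally show ?thesis by (simp add: mult.assoc)
qed

lemma returns_integrand_le_suminf_levels:
  assumes "0 \<le> \<tau>" "x \<in> space M"
  shows "ennreal (\<tau> ^ returns U base n x * exp (\<epsilon> * real (tower_height I r D x)))
      * indicator {x \<in> space M. (U ^^ n) x \<in> base} x
    \<le> (\<Sum>k. ennreal (exp (\<epsilon> * real k)) * (indicator (level k) x * weight \<tau> n x))"
proof -
  obtain p k where p: "p \<in> I" "k < r p" "x \<in> D k p" using in_some_floor assms(2) by blast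
  then have "x \<in> level k" unfolding tower_level_def by blast
  then have "ennreal (\<tau> ^ returns U base n x * exp (\<epsilon> * real (tower_height I r D x)))
      * indicator {x \<in> space M. (U ^^ n) x \<in> base} x
      = ennreal (exp (\<epsilon> * real k)) * (indicator (level k) x * weight \<tau> n x)"
    unfolding weight_def tower_height_eq[OF p] using assms
    by (simp add: indicator_def ennreal_mult mult_ac)
  also have "\<dots> \<le> (\<Sum>k. ennreal (exp (\<epsilon> * real k)) * (indicator (level k) x * weight \<tau> n x))"
    using sum_le_suminf[OF summableI, of "{k}"] by simp
  finally show ?thesis .
qed

lemma base_weight_split:
  assumes "0 \<le> \<tau>" "0 \<le> \<eta>" "\<eta> \<le> 1" "\<tau> \<le> \<eta> ^ N" "0 < \<nu>" "\<nu> \<le> 1"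
  shows "base_weight \<tau> n \<le> ennreal (\<eta> ^ n) * emeasure M base + ennreal ((1 / \<nu>) ^ n) * base_weight (\<nu> ^ N) n"
proof -
  have "indicator base y * weight \<tau> n y
      \<le> ennreal (\<eta> ^ n) * indicator base y + ennreal ((1 / \<nu>) ^ n) * (indicator base y * weight (\<nu> ^ N) n y)" for y
  proof -
    define m where "m = returns U base n y"
    have "ennreal (\<tau> ^ m) \<le> ennreal (\<eta> ^ n + (1 / \<nu>) ^ n * (\<nu> ^ N) ^ m)"
      using power_le_power_or_rescaled[OF assms] by (intro ennreal_leI) auto
    also have "\<dots> = ennreal (\<eta> ^ n) + ennreal ((1 / \<nu>) ^ n) * ennreal ((\<nu> ^ N) ^ m)"
      using assms by (simp add: ennreal_plus[symmetric] ennreal_mult[symmetric] del: ennreal_plus)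
    finally show ?thesis unfolding weight_def m_def[symmetric] by (auto simp: indicator_def)
  qed
  then have "base_weight \<tau> n \<le> (\<integral>\<^sup>+y. ennreal (\<eta> ^ n) * indicator base y
      + ennreal ((1 / \<nu>) ^ n) * (indicator base y * weight (\<nu> ^ N) n y) \<partial>M)"
    unfolding base_weight_def by (intro nn_integral_mono) auto
  also have "\<dots> = ennreal (\<eta> ^ n) * emeasure M base + ennreal ((1 / \<nu>) ^ n) * base_weight (\<nu> ^ N) n"
    using base_sets weight_measurable unfolding base_weight_def
    by (subst nn_integral_add) (auto simp: nn_integral_cmult nn_integral_cmult_indicator)
  finally show ?thesis .
qed

end

lemma expanding_young_tower_imp_young_tower:
  assumes "expanding_young_tower M U I r D"
  obtains J K where "young_tower M U I r D J K"
  using assms unfolding expanding_young_tower_def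
proof (elim conjE exE, goal_cases)
  case (1 J C \<beta>)
  show thesis
  proof (intro 1(1) young_tower.intro young_tower_axioms.intro)
    fix x y assume "x \<in> space M" "y \<in> space M" "same_elt I r D x y"
    then show "J x \<le> (1 + \<bar>C\<bar>) * J y"
      using 1 by (intro bounded_ratio_of_distortion[where \<beta> = \<beta> and s = "sep_time I r D U (U x) (U y)"]) auto
  qed (use 1 in simp)+
qed

locale young_tower_exp_tail = young_tower +
  fixes C0 \<rho> :: real
  assumes tail: "\<And>n. measure M (tower_level I r D n) \<le> C0 * \<rho> ^ n"
begin

lemma C0_pos: "0 < C0"
  using tail[of 0] measure_base_pos base_eq_level_0 by simp

lemma rho_nonneg: "0 \<le> \<rho>"
proof -
  have "0 \<le> C0 * \<rho>" using order_trans[OF measure_nonneg tail[of 1]] by simp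
  then show ?thesis using C0_pos by (simp add: zero_le_mult_iff)
qed

definition transfer_factor :: real where
  "transfer_factor = K^2 * C0 / measure M base"

lemma transfer_factor_pos: "0 < transfer_factor"
  unfolding transfer_factor_def using C0_pos measure_base_pos K_ge_1 by simp

lemma transfer_const_le: "1 \<le> h \<Longrightarrow> transfer_const h \<le> transfer_factor * \<rho> ^ (h - 1)"
proof -
  assume h: "1 \<le> h"
  have "column_floor (h - 1) h \<subseteq> level (h - 1)"
    unfolding column_floor_def tower_level_def using h by auto
  then have "measure M (column_floor (h - 1) h) \<le> C0 * \<rho> ^ (h - 1)"
    using level_sets tail by (meson finite_measure_mono order_trans)
  then show ?thesis unfolding transfer_const_def transfer_factor_def using measure_base_pos
    by (simp add: divide_right_mono mult_left_mono mult.assoc)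
qed

lemma nn_integral_level_weight_le_geometric:
  assumes \<kappa>: "0 \<le> \<kappa>" and \<theta>: "\<rho> < \<theta>" and C: "0 \<le> C" and n: "1 \<le> n"
    and prev: "\<And>m. m < n \<Longrightarrow> base_weight \<kappa> m \<le> ennreal (C * \<theta> ^ m)"
  shows "(\<integral>\<^sup>+x. indicator (level k) x * weight \<kappa> n x \<partial>M)
    \<le> ennreal (\<kappa> * transfer_factor * C / (\<theta> - \<rho>) * \<rho> ^ k * \<theta> ^ n)"
proof -
  have \<theta>0: "0 < \<theta>" using \<theta> rho_nonneg by simp
  have "(\<integral>\<^sup>+x. indicator (level k) x * weight \<kappa> n x \<partial>M)
      \<le> (\<Sum>j=1..n. ennreal \<kappa> * ennreal (transfer_const (k + j)) * base_weight \<kappa> (n - j))"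
    by (rule nn_integral_level_weight_le[OF \<kappa> n])
  also have "\<dots> \<le> (\<Sum>j=1..n. ennreal (\<kappa> * (transfer_factor * \<rho> ^ (k + j - 1)) * (C * \<theta> ^ (n - j))))"
  proof (intro sum_mono)
    fix j assume j: "j \<in> {1..n}"
    have "ennreal \<kappa> * ennreal (transfer_const (k + j)) * base_weight \<kappa> (n - j)
        \<le> ennreal \<kappa> * ennreal (transfer_factor * \<rho> ^ (k + j - 1)) * ennreal (C * \<theta> ^ (n - j))"
      using transfer_const_le[of "k + j"] prev[of "n - j"] j by (intro mult_mono ennreal_leI) auto
    then show "ennreal \<kappa> * ennreal (transfer_const (k + j)) * base_weight \<kappa> (n - j)
        \<le> ennreal (\<kappa> * (transfer_factor * \<rho> ^ (k + j - 1)) * (C * \<theta> ^ (n - j)))"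
      using \<kappa> C transfer_factor_pos rho_nonneg \<theta>0 by (simp add: ennreal_mult)
  qed
  also have "\<dots> = ennreal (\<Sum>j=1..n. \<kappa> * (transfer_factor * \<rho> ^ (k + j - 1)) * (C * \<theta> ^ (n - j)))"
    using \<kappa> C transfer_factor_pos rho_nonneg \<theta>0 by (intro sum_ennreal) auto
  also have "\<dots> \<le> ennreal (\<kappa> * transfer_factor * C / (\<theta> - \<rho>) * \<rho> ^ k * \<theta> ^ n)"
  proof (intro ennreal_leI)
    have "(\<Sum>j=1..n. \<kappa> * (transfer_factor * \<rho> ^ (k + j - 1)) * (C * \<theta> ^ (n - j)))
        = \<kappa> * transfer_factor * C * \<rho> ^ k * (\<Sum>j=1..n. \<rho> ^ (j - 1) * \<theta> ^ (n - j))"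
      unfolding sum_distrib_left
      by (intro sum.cong refl) (auto simp: power_add[symmetric] mult_ac)
    also have "\<dots> \<le> \<kappa> * transfer_factor * C * \<rho> ^ k * (\<theta> ^ n / (\<theta> - \<rho>))"
      using convolution_geometric_le[OF rho_nonneg \<theta>] \<kappa> C transfer_factor_pos rho_nonneg
      by (intro mult_left_mono) auto
    finally show "(\<Sum>j=1..n. \<kappa> * (transfer_factor * \<rho> ^ (k + j - 1)) * (C * \<theta> ^ (n - j)))
        \<le> \<kappa> * transfer_factor * C / (\<theta> - \<rho>) * \<rho> ^ k * \<theta> ^ n"
      by (simp add: field_simps)
  qed
  finally show ?thesis .
qed

lemma base_weight_le_small:
  assumes \<kappa>: "0 \<le> \<kappa>" and \<theta>: "\<rho> < \<theta>" and small: "\<kappa> * transfer_factor \<le> \<theta> - \<rho>"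
  shows "base_weight \<kappa> n \<le> ennreal (measure M base * \<theta> ^ n)"
proof (induction n rule: less_induct)
  case (less n)
  show ?case
  proof (cases "n = 0")
    case True then show ?thesis using base_weight_0 by (simp add: emeasure_eq_measure)
  next
    case False
    have "base_weight \<kappa> n = (\<integral>\<^sup>+x. indicator (level 0) x * weight \<kappa> n x \<partial>M)"
      unfolding base_weight_def base_eq_level_0 ..
    also have "\<dots> \<le> ennreal (\<kappa> * transfer_factor * measure M base / (\<theta> - \<rho>) * \<rho> ^ 0 * \<theta> ^ n)"
      using False less by (intro nn_integral_level_weight_le_geometric[OF \<kappa> \<theta>]) auto
    also have "\<dots> \<le> ennreal (measure M base * \<theta> ^ n)"
    proof (intro ennreal_leI)
      have "\<kappa> * transfer_factor / (\<theta> - \<rho>) \<le> 1" using small \<theta> by simp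
      from mult_right_mono[OF this, of "measure M base * \<theta> ^ n"] \<theta> rho_nonneg
      show "\<kappa> * transfer_factor * measure M base / (\<theta> - \<rho>) * \<rho> ^ 0 * \<theta> ^ n \<le> measure M base * \<theta> ^ n"
        by (simp add: mult_ac)
    qed
    finally show ?thesis .
  qed
qed

text \<open>If \<open>\<Psi>\<^sub>n \<ge> n / N\<close> then \<open>\<tau>\<^bsup>\<Psi>\<^sub>n\<^esup> \<le> \<eta>\<^sup>n\<close> with \<open>\<eta> = \<tau>\<^bsup>1/N\<^esup>\<close>; otherwise
  \<open>(\<nu>\<^sup>N)\<^bsup>\<Psi>\<^sub>n\<^esup> \<ge> \<nu>\<^sup>n\<close>, so \<open>\<tau>\<^bsup>\<Psi>\<^sub>n\<^esup>\<close> costs at most \<open>\<nu>\<^sup>-\<^sup>n\<close> times the weight for the parameter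
  \<open>\<nu>\<^sup>N\<close>, which is small enough for \<open>base_weight_le_small\<close>.\<close>
lemma base_weight_exp_decay:
  assumes \<tau>: "0 \<le> \<tau>" "\<tau> < 1" and \<rho>: "\<rho> < 1"
  obtains \<theta> where "\<rho> < \<theta>" "\<theta> < 1" "\<And>n. base_weight \<tau> n \<le> ennreal (2 * measure M base * \<theta> ^ n)"
proof -
  define t where "t = (1 + \<rho>) / 2"
  define \<nu> where "\<nu> = (1 + t) / 2"
  have t: "\<rho> < t" "t < 1" using \<rho> unfolding t_def by auto
  have \<nu>: "t < \<nu>" "\<nu> < 1" "0 < \<nu>" using t rho_nonneg unfolding \<nu>_def by auto
  have "0 < (t - \<rho>) / transfer_factor" using t transfer_factor_pos by simp
  then obtain N where N: "0 < N" "\<nu> ^ N < (t - \<rho>) / transfer_factor"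
    by (rule obtain_pos_power_less) (use \<nu> in auto)
  then have "\<nu> ^ N * transfer_factor \<le> t - \<rho>" using transfer_factor_pos by (simp add: field_simps)
  then have small: "base_weight (\<nu> ^ N) n \<le> ennreal (measure M base * t ^ n)" for n
    using \<nu> t by (intro base_weight_le_small) auto
  define \<eta> where "\<eta> = root N \<tau>"
  have \<eta>: "0 \<le> \<eta>" "\<eta> < 1" "\<eta> ^ N = \<tau>"
    using \<tau> N(1) unfolding \<eta>_def by (auto simp: real_root_pow_pos2)
  define \<theta> where "\<theta> = max \<eta> (t / \<nu>)"
  have "t \<le> t / \<nu>" "t / \<nu> < 1" using t \<nu> rho_nonneg by (auto simp: field_simps)
  then have \<theta>: "\<rho> < \<theta>" "\<theta> < 1" "\<eta> \<le> \<theta>" "t / \<nu> \<le> \<theta>"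
    using t \<eta> unfolding \<theta>_def by auto
  have "base_weight \<tau> n \<le> ennreal (2 * measure M base * \<theta> ^ n)" for n
  proof -
    have "base_weight \<tau> n \<le> ennreal (\<eta> ^ n) * emeasure M base + ennreal ((1 / \<nu>) ^ n) * base_weight (\<nu> ^ N) n"
      using \<tau> \<eta> \<nu> by (intro base_weight_split) auto
    also have "\<dots> \<le> ennreal (\<eta> ^ n) * ennreal (measure M base) + ennreal ((1 / \<nu>) ^ n) * ennreal (measure M base * t ^ n)"
      using small by (intro add_mono mult_left_mono) (auto simp: emeasure_eq_measure)
    also have "\<dots> = ennreal ((\<eta> ^ n + (t / \<nu>) ^ n) * measure M base)"
      using \<eta> \<nu> t rho_nonneg
      by (simp add: ennreal_plus[symmetric] ennreal_mult[symmetric] power_divide algebra_simps del: ennreal_plus)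
    also have "\<dots> \<le> ennreal (2 * measure M base * \<theta> ^ n)"
    proof (intro ennreal_leI)
      have "\<eta> ^ n + (t / \<nu>) ^ n \<le> 2 * \<theta> ^ n"
        using \<theta> \<eta> t \<nu> rho_nonneg power_mono[of \<eta> \<theta> n] power_mono[of "t / \<nu>" \<theta> n] by simp
      from mult_right_mono[OF this measure_nonneg[of M base]] show "(\<eta> ^ n + (t / \<nu>) ^ n) * measure M base \<le> 2 * measure M base * \<theta> ^ n"
        by (simp add: mult_ac)
    qed
    finally show ?thesis .
  qed
  then show ?thesis using that \<theta> by blast
qed

lemma nn_integral_level_weight_exp_decay:
  assumes \<tau>: "0 \<le> \<tau>" "\<tau> < 1" and \<rho>: "\<rho> < 1"
  obtains Z \<theta> where "0 \<le> Z" "0 < \<theta>" "\<theta> < 1"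
    "\<And>n k. (\<integral>\<^sup>+x. indicator (level k) x * weight \<tau> n x \<partial>M) \<le> ennreal (Z * \<rho> ^ k * \<theta> ^ n)"
proof -
  obtain \<theta> where \<theta>: "\<rho> < \<theta>" "\<theta> < 1" and decay: "\<And>m. base_weight \<tau> m \<le> ennreal (2 * measure M base * \<theta> ^ m)"
    using base_weight_exp_decay[OF \<tau> \<rho>] by blast
  define Z where "Z = max 1 (\<tau> * transfer_factor * (2 * measure M base) / (\<theta> - \<rho>))"
  have \<theta>0: "0 < \<theta>" using \<theta> rho_nonneg by simp
  have "(\<integral>\<^sup>+x. indicator (level k) x * weight \<tau> n x \<partial>M) \<le> ennreal (Z * \<rho> ^ k * \<theta> ^ n)" for n k
  proof (cases "n = 0")
    case True
    have "(\<integral>\<^sup>+x. indicator (level k) x * weight \<tau> 0 x \<partial>M) = emeasure M (level k \<inter> base)"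
      by (rule nn_integral_level_weight_0)
    also have "\<dots> \<le> ennreal (Z * \<rho> ^ k)"
    proof (cases "k = 0")
      case True
      have "emeasure M (level 0 \<inter> base) \<le> ennreal 1" using emeasure_le_1 by simp
      also have "\<dots> \<le> ennreal Z" unfolding Z_def by (intro ennreal_leI) simp
      finally show ?thesis using True by simp
    qed (simp add: level_inter_base)
    finally show ?thesis using True by simp
  next
    case False
    have "(\<integral>\<^sup>+x. indicator (level k) x * weight \<tau> n x \<partial>M)
        \<le> ennreal (\<tau> * transfer_factor * (2 * measure M base) / (\<theta> - \<rho>) * \<rho> ^ k * \<theta> ^ n)"
      using False decay \<tau> \<theta> by (intro nn_integral_level_weight_le_geometric) auto
    also have "\<dots> \<le> ennreal (Z * \<rho> ^ k * \<theta> ^ n)"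
      unfolding Z_def using rho_nonneg \<theta>0 by (intro ennreal_leI mult_right_mono) auto
    finally show ?thesis .
  qed
  then show ?thesis using that[of Z \<theta>] \<theta> \<theta>0 unfolding Z_def by auto
qed

lemma weighted_returns_integral_exp_decay:
  assumes \<rho>: "\<rho> < 1" and \<tau>: "0 \<le> \<tau>" "\<tau> < 1" and q: "exp \<epsilon> * \<rho> < 1"
  shows "\<exists>C>0. \<exists>\<theta><1. \<forall>n.
    (\<integral>\<^sup>+x\<in>{x \<in> space M. (U ^^ n) x \<in> base}.
        ennreal (\<tau> ^ returns U base n x * exp (\<epsilon> * real (tower_height I r D x))) \<partial>M)
      \<le> ennreal (C * \<theta> ^ n)"
proof -
  obtain Z \<theta> where Z: "0 \<le> Z" and \<theta>: "0 < \<theta>" "\<theta> < 1"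
    and level: "\<And>n k. (\<integral>\<^sup>+x. indicator (level k) x * weight \<tau> n x \<partial>M) \<le> ennreal (Z * \<rho> ^ k * \<theta> ^ n)"
    using nn_integral_level_weight_exp_decay[OF \<tau> \<rho>] by blast
  define C where "C = max 1 (Z / (1 - exp \<epsilon> * \<rho>))"
  have "(\<integral>\<^sup>+x\<in>{x \<in> space M. (U ^^ n) x \<in> base}.
        ennreal (\<tau> ^ returns U base n x * exp (\<epsilon> * real (tower_height I r D x))) \<partial>M)
      \<le> ennreal (C * \<theta> ^ n)" for n
  proof -
    have "(\<integral>\<^sup>+x\<in>{x \<in> space M. (U ^^ n) x \<in> base}.
          ennreal (\<tau> ^ returns U base n x * exp (\<epsilon> * real (tower_height I r D x))) \<partial>M)
        \<le> (\<integral>\<^sup>+x. (\<Sum>k. ennreal (exp (\<epsilon> * real k)) * (indicator (level k) x * weight \<tau> n x)) \<partial>M)"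
      using returns_integrand_le_suminf_levels[OF \<tau>(1)] by (intro nn_integral_mono) auto
    also have "\<dots> = (\<Sum>k. ennreal (exp (\<epsilon> * real k)) * (\<integral>\<^sup>+x. indicator (level k) x * weight \<tau> n x \<partial>M))"
      using level_sets weight_measurable by (simp add: nn_integral_suminf nn_integral_cmult)
    also have "\<dots> \<le> (\<Sum>k. ennreal ((exp \<epsilon> * \<rho>) ^ k * (Z * \<theta> ^ n)))"
    proof (intro suminf_le)
      fix k
      have "ennreal (exp (\<epsilon> * real k)) * (\<integral>\<^sup>+x. indicator (level k) x * weight \<tau> n x \<partial>M)
          \<le> ennreal (exp (\<epsilon> * real k)) * ennreal (Z * \<rho> ^ k * \<theta> ^ n)"
        by (intro mult_left_mono level) simp
      also have "\<dots> = ennreal ((exp \<epsilon> * \<rho>) ^ k * (Z * \<theta> ^ n))"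
        using Z \<theta> rho_nonneg
        by (simp add: ennreal_mult[symmetric] exp_of_nat_mult[symmetric] power_mult_distrib mult_ac)
      finally show "ennreal (exp (\<epsilon> * real k)) * (\<integral>\<^sup>+x. indicator (level k) x * weight \<tau> n x \<partial>M)
          \<le> ennreal ((exp \<epsilon> * \<rho>) ^ k * (Z * \<theta> ^ n))" .
    qed auto
    also have "\<dots> = ennreal (Z / (1 - exp \<epsilon> * \<rho>) * \<theta> ^ n)"
      using q rho_nonneg Z \<theta> summable_geometric[of "exp \<epsilon> * \<rho>"]
      by (subst suminf_ennreal2) (auto simp: suminf_mult2[symmetric] suminf_geometric intro: summable_mult2)
    also have "\<dots> \<le> ennreal (C * \<theta> ^ n)"
      unfolding C_def using \<theta> by (intro ennreal_leI mult_right_mono) auto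
    finally show ?thesis .
  qed
  moreover have "0 < C" unfolding C_def by simp
  ultimately show ?thesis using \<theta> by blast
qed

end

theorem mainTheorem11:
  fixes M :: "'a measure" and U :: "'a \<Rightarrow> 'a" and I :: "nat set"
    and r :: "nat \<Rightarrow> nat" and D :: "nat \<Rightarrow> nat \<Rightarrow> 'a set"
    and C0 \<rho> \<tau> \<epsilon> :: real
  assumes tower: "expanding_young_tower M U I r D"
    and tail: "\<forall>n. measure M (tower_level I r D n) \<le> C0 * \<rho> ^ n"
    and "\<rho> < 1"
    and "0 \<le> \<tau>" and "\<tau> < 1"
    and "0 < \<epsilon>" and "exp \<epsilon> * \<rho> < 1"
  shows "\<exists>C>0. \<exists>\<theta><1. \<forall>n::nat.
    (\<integral>\<^sup>+x\<in>{x \<in> space M. (U ^^ n) x \<in> tower_base I D}.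
        ennreal (\<tau> ^ returns U (tower_base I D) n x * exp (\<epsilon> * real (tower_height I r D x))) \<partial>M)
      \<le> ennreal (C * \<theta> ^ n)"
proof -
  obtain J K where "young_tower M U I r D J K"
    using expanding_young_tower_imp_young_tower[OF tower] .
  then interpret young_tower_exp_tail M U I r D J K C0 \<rho>
    using tail by (intro young_tower_exp_tail.intro young_tower_exp_tail_axioms.intro) auto
  show ?thesis
    using assms by (intro weighted_returns_integral_exp_decay) auto
qed

end
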